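(* Let $T$ be a compactum, $\mathbf a,\mathbf b,\mathbf c$ entourages of $T$, $p\in T$ and $k>2$. If $\mathbf a-\mathbf b-p\ (k)$ and $\mathbf b-\mathbf c-p\ (k)$, then $\mathbf a-\mathbf c-p\ (k)$.
   Context: Let $T$ be a compact Hausdorff space, $S^2T$ the space of unordered pairs of points of $T$ (diagonal allowed), $\Delta^2T$ the diagonal. An entourage is a neighborhood of $\Delta^2T$ in $S^2T$. For an entourage $\mathbf e$, $\Delta_{\mathbf e}$ is the graph distance on $T$ of the graph with vertex set $T$ and edges the pairs in $\mathbf e$; for sets, $\Delta_{\mathbf e}(a,b)=\inf$ over $x\in a,y\in b$ and $\widetilde\Delta_{\mathbf e}(a,b)=\sup$. A set is $\mathbf e$-small if its $\Delta_{\mathbf e}$-diameter is $\le1$. Entourages $\mathbf a,\mathbf b$ are unlinked ($\mathbf a\bowtie\mathbf b$) if $T=a\cup b$ for some $\mathbf a$-small $a$ and $\mathbf b$-small $b$, linked otherwise. Standing conventions: every entourage considered is linked with itself and $T$ has $\Delta_{\mathbf a}$-diameter $>4$. For $\mathbf a\bowtie\mathbf b$, $\mathrm{sh}_{\mathbf a}\mathbf b=\bigcap\{a: a\ \mathbf a\text{-small},\ T\setminus a\ \mathbf b\text{-small}\}$. For $p\in T$, $\mathbf a-\mathbf b-p\ (k)$ means $\mathbf a\bowtie\mathbf b$ and $\Delta_{\mathbf b}(\mathrm{sh}_{\mathbf b}\mathbf a,b)>k$ for every $\mathbf b$-small neighborhood $b$ of $p$. *)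

theory Defs
  imports Main "HOL-Library.Extended_Nat"
begin

text \<open>The compactum T is the whole of a type 'a of class t2_space with
  compact UNIV. An unordered pair {x,y} is encoded by the symmetric pair
  (x,y),(y,x) of T x T; so an entourage (a neighbourhood of the diagonal in
  the symmetric square S^2 T) is a symmetric relation containing an open
  neighbourhood of the diagonal of T x T.\<close>

definition entourage :: "('a::topological_space \<times> 'a) set \<Rightarrow> bool" where
  "entourage E \<longleftrightarrow> sym E \<and>
     (\<exists>U. open U \<and> (\<forall>x. (x, x) \<in> U) \<and> U \<subseteq> E)"

text \<open>Graph distance of the graph with vertex set T and edge set E.
  Infinity if there is no path.\<close>
definition gdist :: "('a \<times> 'a) set \<Rightarrow> 'a \<Rightarrow> 'a \<Rightarrow> enat" where
  "gdist E x y = (Inf {enat n | n. (x, y) \<in> (E \<union> Id) ^^ n})"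

definition setdist :: "('a \<times> 'a) set \<Rightarrow> 'a set \<Rightarrow> 'a set \<Rightarrow> enat" where
  "setdist E A B = (Inf {gdist E x y | x y. x \<in> A \<and> y \<in> B})"

definition diam :: "('a \<times> 'a) set \<Rightarrow> 'a set \<Rightarrow> enat" where
  "diam E A = (Sup {gdist E x y | x y. x \<in> A \<and> y \<in> A})"

definition small :: "('a \<times> 'a) set \<Rightarrow> 'a set \<Rightarrow> bool" where
  "small E A \<longleftrightarrow> diam E A \<le> 1"

definition unlinked :: "('a \<times> 'a) set \<Rightarrow> ('a \<times> 'a) set \<Rightarrow> bool" where
  "unlinked A B \<longleftrightarrow> (\<exists>a b. small A a \<and> small B b \<and> a \<union> b = UNIV)"

text \<open>sh_A B, defined for unlinked A, B.\<close>
definition sh :: "('a \<times> 'a) set \<Rightarrow> ('a \<times> 'a) set \<Rightarrow> 'a set" where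
  "sh A B = \<Inter> {a. small A a \<and> small B (UNIV - a)}"

definition sep :: "('a::topological_space \<times> 'a) set \<Rightarrow> ('a \<times> 'a) set \<Rightarrow> 'a \<Rightarrow> nat \<Rightarrow> bool" where
  "sep A B p k \<longleftrightarrow> unlinked A B \<and>
     (\<forall>b. small B b \<and> (\<exists>U. open U \<and> p \<in> U \<and> U \<subseteq> b) \<longrightarrow>
          setdist B (sh B A) b > enat k)"

text \<open>Standing conventions for an entourage: linked with itself and T has
  diameter > 4.\<close>
definition admissible :: "('a::topological_space \<times> 'a) set \<Rightarrow> bool" where
  "admissible E \<longleftrightarrow> entourage E \<and> \<not> unlinked E E \<and> diam E UNIV > 4"

end

theory Submission
  imports Defs
begin

(* The heart of the argument is a transfer of complements.  Suppose y and y'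
   are c-small sets whose complements are b-small, with p outside y'.  Since c
   is linked with itself, some point m lies outside both y and y'.  Fix a set
   z that is b-small with a-small complement and a point t of sh_b a (this
   shadow is nonempty because a has diameter > 4).  Then t lies in z, and any
   point v of z outside y would give a b-path t - v - m - p of length 3 <= k,
   contradicting  a - b - p (k).  Hence T - y lies inside T - z, so it is
   a-small.  Applied with  y  witnessing that a point s is not in sh_c b
   (guaranteed by  b - c - p (k)  whenever s is c-close to a small
   neighbourhood of p), this shows that s is not in sh_c a; with s = p it also
   shows that a and c are unlinked. *)

text \<open>In the reflexive closure every point is joined to itself by a path of
  any length, so paths can be padded.\<close>

lemma relpow_refl: "(x, x) \<in> (E \<union> Id) ^^ n"
  by (induction n) auto

lemma relpow_refl_mono:
  assumes "(x, y) \<in> (E \<union> Id) ^^ m" and "m \<le> n"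
  shows "(x, y) \<in> (E \<union> Id) ^^ n"
proof -
  obtain d where d: "n = m + d" using assms(2) le_Suc_ex by blast
  have "(y, y) \<in> (E \<union> Id) ^^ d" by (rule relpow_refl)
  with assms(1) have "(x, y) \<in> (E \<union> Id) ^^ m O (E \<union> Id) ^^ d" by blast
  then show ?thesis unfolding d relpow_add .
qed

lemma gdist_le_iff: "gdist E x y \<le> enat n \<longleftrightarrow> (x, y) \<in> (E \<union> Id) ^^ n"
proof
  assume "gdist E x y \<le> enat n"
  then have "\<forall>z > enat n. \<exists>d \<in> {enat m | m. (x, y) \<in> (E \<union> Id) ^^ m}. d < z"
    unfolding gdist_def Inf_le_iff .
  then obtain d where "d \<in> {enat m | m. (x, y) \<in> (E \<union> Id) ^^ m}" "d < enat (Suc n)"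
    by (meson enat_ord_simps(2) lessI)
  then obtain m where "enat m < enat (Suc n)" "(x, y) \<in> (E \<union> Id) ^^ m"
    by blast
  then show "(x, y) \<in> (E \<union> Id) ^^ n" using relpow_refl_mono by fastforce
next
  assume "(x, y) \<in> (E \<union> Id) ^^ n"
  then show "gdist E x y \<le> enat n" unfolding gdist_def by (intro Inf_lower) blast
qed

lemma setdist_greater_iff:
  "enat k < setdist E A B \<longleftrightarrow> (\<forall>x\<in>A. \<forall>y\<in>B. enat k < gdist E x y)"
proof
  assume "enat k < setdist E A B"
  then show "\<forall>x\<in>A. \<forall>y\<in>B. enat k < gdist E x y"
    unfolding setdist_def by (blast intro: less_le_trans Inf_lower)
next
  assume "\<forall>x\<in>A. \<forall>y\<in>B. enat k < gdist E x y"
  then have "enat (Suc k) \<le> setdist E A B"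
    unfolding setdist_def by (intro Inf_greatest) (auto simp: Suc_ile_eq)
  then show "enat k < setdist E A B" by (simp add: Suc_ile_eq)
qed

lemma small_iff: "small E s \<longleftrightarrow> (\<forall>x\<in>s. \<forall>y\<in>s. (x, y) \<in> E \<union> Id)"
proof -
  have "small E s \<longleftrightarrow> (\<forall>x\<in>s. \<forall>y\<in>s. gdist E x y \<le> enat 1)"
    unfolding small_def diam_def Sup_le_iff one_enat_def by blast
  then show ?thesis unfolding gdist_le_iff by simp
qed

lemma small_subset: "small E s \<Longrightarrow> t \<subseteq> s \<Longrightarrow> small E t"
  unfolding small_iff by blast

text \<open>Every point has an open neighbourhood that is small for a given
  entourage: take a box around (p, p) inside the open part of the entourage.\<close>

lemma entourage_small_nbhd:
  fixes p :: "'a::topological_space"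
  assumes "entourage E"
  obtains V where "open V" "p \<in> V" "small E V"
proof -
  obtain U where U: "open U" "\<forall>x. (x, x) \<in> U" "U \<subseteq> E"
    using assms unfolding entourage_def by blast
  obtain A B where AB: "open A" "open B" "(p, p) \<in> A \<times> B" "A \<times> B \<subseteq> U"
    using open_prod_elim[OF U(1) U(2)[rule_format, of p]] by metis
  show ?thesis
  proof (rule that[of "A \<inter> B"])
    show "small E (A \<inter> B)" using AB U(3) by (auto simp: small_iff)
  qed (use AB in auto)
qed

lemma not_in_sh_iff: "x \<notin> sh B A \<longleftrightarrow> (\<exists>y. small B y \<and> small A (UNIV - y) \<and> x \<notin> y)"
  unfolding sh_def by auto

lemma unlinked_small_complement:
  assumes "unlinked A B"
  obtains z where "small B z" "small A (UNIV - z)"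
proof -
  obtain \<alpha> \<beta> where "small A \<alpha>" "small B \<beta>" "\<alpha> \<union> \<beta> = UNIV"
    using assms unfolding unlinked_def by blast
  then show ?thesis using that[of \<beta>] small_subset[of A \<alpha> "UNIV - \<beta>"] by blast
qed

lemma small_complement_unlinked:
  "small C y \<Longrightarrow> small A (UNIV - y) \<Longrightarrow> unlinked A C"
  unfolding unlinked_def by (intro exI[of _ "UNIV - y"] exI[of _ y]) auto

text \<open>If B is linked with itself, the shadow sh_B A is nonempty unless T has
  A-diameter at most 2: otherwise two complements of B-small sets, each
  A-small, would meet and join any two points by an A-path of length 2.\<close>

lemma sh_nonempty:
  assumes "\<not> unlinked B B" and "diam A UNIV > 4"
  shows "sh B A \<noteq> {}"
proof
  assume empty: "sh B A = {}"
  have "(x, y) \<in> (A \<union> Id) ^^ 2" for x y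
  proof -
    obtain z1 where z1: "small B z1" "small A (UNIV - z1)" "x \<notin> z1"
      using empty unfolding sh_def by blast
    obtain z2 where z2: "small B z2" "small A (UNIV - z2)" "y \<notin> z2"
      using empty unfolding sh_def by blast
    obtain q where "q \<notin> z1" "q \<notin> z2"
      using assms(1) z1(1) z2(1) unfolding unlinked_def by blast
    then have "(x, q) \<in> A \<union> Id" "(q, y) \<in> A \<union> Id"
      using z1 z2 unfolding small_iff by blast+
    then show ?thesis by (auto simp: numeral_2_eq_2)
  qed
  then have "diam A UNIV \<le> enat 2"
    unfolding diam_def by (auto intro!: Sup_least simp: gdist_le_iff)
  with assms(2) have "enat 4 < enat 2"
    unfolding numeral_eq_enat using less_le_trans by blast
  then show False by simp
qed

lemma sep_close_not_in_sh:
  assumes "sep A B p k" and "small B \<beta>" and "\<exists>U. open U \<and> p \<in> U \<and> U \<subseteq> \<beta>"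
    and "g \<in> \<beta>" and "(s, g) \<in> (B \<union> Id) ^^ k"
  shows "s \<notin> sh B A"
proof
  assume "s \<in> sh B A"
  moreover have "enat k < setdist B (sh B A) \<beta>"
    using assms(1-3) unfolding sep_def by blast
  ultimately have "enat k < gdist B s g" using assms(4) by (simp add: setdist_greater_iff)
  moreover have "gdist B s g \<le> enat k" using assms(5) by (simp add: gdist_le_iff)
  ultimately show False by simp
qed

lemma sep_sh_far_from_point:
  assumes "sep A B p k" and "entourage B" and "t \<in> sh B A"
  shows "(t, p) \<notin> (B \<union> Id) ^^ k"
proof
  assume path: "(t, p) \<in> (B \<union> Id) ^^ k"
  obtain V where "open V" "p \<in> V" "small B V" using entourage_small_nbhd[OF assms(2)] .
  then have "t \<notin> sh B A" using sep_close_not_in_sh[OF assms(1) _ _ _ path] by blast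
  with assms(3) show False by simp
qed

lemma complement_transfer:
  assumes z: "small b z" "small a (UNIV - z)" "t \<in> z"
    and far: "(t, p) \<notin> (b \<union> Id) ^^ 3"
    and y: "small b (UNIV - y)" "m \<notin> y"
    and y': "small b (UNIV - y')" "m \<notin> y'" "p \<notin> y'"
  shows "small a (UNIV - y)"
proof (rule small_subset[OF z(2)], rule subsetI)
  fix v assume v: "v \<in> UNIV - y"
  have "v \<notin> z"
  proof
    assume "v \<in> z"
    then have "(t, v) \<in> b \<union> Id" using z(1,3) unfolding small_iff by blast
    moreover have "(v, m) \<in> b \<union> Id" using y v unfolding small_iff by blast
    moreover have "(m, p) \<in> b \<union> Id" using y' unfolding small_iff by blast
    ultimately have "(t, p) \<in> (b \<union> Id) ^^ 3" by (auto simp: numeral_3_eq_3)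
    with far show False by contradiction
  qed
  then show "v \<in> UNIV - z" by simp
qed

lemma escape_from_sh:
  assumes ab: "sep a b p k" and bc: "sep b c p k" and k: "3 \<le> k"
    and b: "entourage b" "\<not> unlinked b b" and c: "\<not> unlinked c c"
    and a: "diam a UNIV > 4"
    and \<gamma>: "small c \<gamma>" "\<exists>U. open U \<and> p \<in> U \<and> U \<subseteq> \<gamma>"
    and s: "g \<in> \<gamma>" "(s, g) \<in> (c \<union> Id) ^^ k"
  shows "\<exists>y. small c y \<and> small a (UNIV - y) \<and> s \<notin> y"
proof -
  have "s \<notin> sh c b" by (rule sep_close_not_in_sh[OF bc \<gamma> s])
  then obtain y where y: "small c y" "small b (UNIV - y)" "s \<notin> y"
    unfolding not_in_sh_iff by blast
  have "p \<in> \<gamma>" using \<gamma>(2) by blast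
  then have "p \<notin> sh c b" by (rule sep_close_not_in_sh[OF bc \<gamma> _ relpow_refl])
  then obtain y' where y': "small c y'" "small b (UNIV - y')" "p \<notin> y'"
    unfolding not_in_sh_iff by blast
  obtain m where m: "m \<notin> y" "m \<notin> y'"
    using c y(1) y'(1) unfolding unlinked_def by blast
  obtain z where z: "small b z" "small a (UNIV - z)"
    using ab unfolding sep_def by (blast elim: unlinked_small_complement)
  obtain t where t: "t \<in> sh b a" using sh_nonempty[OF b(2) a] by blast
  then have "t \<in> z" using z unfolding sh_def by blast
  moreover have "(t, p) \<notin> (b \<union> Id) ^^ 3"
    using sep_sh_far_from_point[OF ab b(1) t] relpow_refl_mono[where E = b and m = 3 and n = k] k by blast
  ultimately have "small a (UNIV - y)"
    using complement_transfer[OF z _ _ y(2) m(1) y'(2) m(2) y'(3)] by blast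
  with y show ?thesis by blast
qed

theorem lemma3p17:
  fixes a b c :: "('a::t2_space \<times> 'a) set" and p :: 'a and k :: nat
  assumes "compact (UNIV :: 'a set)"
    and "admissible a" and "admissible b" and "admissible c"
    and "k > 2"
    and "sep a b p k" and "sep b c p k"
  shows "sep a c p k"
proof -
  have k: "3 \<le> k" using assms(5) by simp
  have a: "diam a UNIV > 4" and b: "entourage b" "\<not> unlinked b b"
    and c: "entourage c" "\<not> unlinked c c"
    using assms(2-4) unfolding admissible_def by blast+
  note escape = escape_from_sh[OF assms(6,7) k b c(2) a]
  obtain V where V: "open V" "p \<in> V" "small c V" using entourage_small_nbhd[OF c(1)] .
  then have "\<exists>U. open U \<and> p \<in> U \<and> U \<subseteq> V" by blast
  then obtain y where "small c y" "small a (UNIV - y)"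
    using escape[OF V(3) _ V(2) relpow_refl] by blast
  then have "unlinked a c" by (rule small_complement_unlinked)
  moreover have "enat k < setdist c (sh c a) \<gamma>"
    if "small c \<gamma>" "\<exists>U. open U \<and> p \<in> U \<and> U \<subseteq> \<gamma>" for \<gamma>
  proof (unfold setdist_greater_iff, intro ballI)
    fix s g assume s: "s \<in> sh c a" and g: "g \<in> \<gamma>"
    show "enat k < gdist c s g"
    proof (rule ccontr)
      assume "\<not> enat k < gdist c s g"
      then have "(s, g) \<in> (c \<union> Id) ^^ k" unfolding not_less gdist_le_iff .
      then have "s \<notin> sh c a" unfolding not_in_sh_iff by (rule escape[OF that g])
      with s show False by contradiction
    qed
  qed
  ultimately show ?thesis unfolding sep_def by blast
qed

end
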